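(* Let $\mathcal{X}\subset\mathbb{R}^D$, let $\mathcal{D}$ be a probability distribution on $\mathcal{X}$, and let $\mathcal{S}=\{\mathbf{x}_1,\dots,\mathbf{x}_n\}$ consist of $n$ i.i.d. samples from $\mathcal{D}$. Let $N_\phi,N_\theta$ be positive integers and let $\ell:\mathbb{R}^{N_\phi}\times\mathbb{R}^{N_\theta}\times\mathcal{X}\to[0,1]$ be a measurable loss, with $R(\phi,\theta)=\mathbb{E}_{\mathbf{x}\sim\mathcal{D}}[\ell(\phi,\theta,\mathbf{x})]$ and $\widehat{R}_{\mathcal{S}}(\phi,\theta)=\frac1n\sum_{i=1}^n\ell(\phi,\theta,\mathbf{x}_i)$. Let $\delta\in(0,1)$, fix $\phi^0\in\mathbb{R}^{N_\phi}$, $\theta^0\in\mathbb{R}^{N_\theta}$, $\sigma_\phi^2>0$, $\sigma_\theta^2>0$ independently of $\mathcal{S}$, and let $(\phi,\theta)=(\phi(\mathcal{S}),\theta(\mathcal{S}))$ be the output of a (measurable) learning algorithm given the dataset $\mathcal{S}$. Then with probability at least $1-\delta$ over both $\mathcal{S}\sim\mathcal{D}^n$ and independent $\varepsilon_\phi\sim\mathcal{N}(0,\sigma^2_\phi I_{N_\phi})$, $\varepsilon_\theta\sim\mathcal{N}(0,\sigma^2_\theta I_{N_\theta})$, \begin{multline*} \mathrm{kl}\left(\widehat{R}_{\mathcal{S}}(\phi+\varepsilon_\phi,\theta+\varepsilon_\theta)\,\|\,R(\phi+\varepsilon_\phi,\theta+\varepsilon_\theta)\right) \\ \leq \frac{\|\phi-\phi^0+\varepsilon_\phi\|_2^2-\|\varepsilon_\phi\|_2^2}{2\sigma^2_\phi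 n} + \frac{\|\theta-\theta^0+\varepsilon_\theta\|_2^2-\|\varepsilon_\theta\|_2^2}{2\sigma^2_\theta n} + \frac{\log(2\sqrt{n}/\delta)}{n}. \end{multline*}
   Context: $\mathrm{kl}$ denotes the binary Kullback--Leibler divergence $\mathrm{kl}(q\|p)=q\log\frac{q}{p}+(1-q)\log\frac{1-q}{1-p}$ for $q,p\in(0,1)$ (extended by continuity / the usual conventions). In the paper $\phi,\theta$ are the encoder and decoder weights of a (pseudo-)variational autoencoder, the algorithm is the one minimising a PAC-Bayes objective, and $\ell$ is a rescaled truncated reconstruction loss with values in $[0,1]$; only boundedness and measurability are used. *)

theory Defs
  imports "HOL-Probability.Probability"
begin

definition kl_term :: "real \<Rightarrow> real \<Rightarrow> ereal" where
  "kl_term a b = (if a = 0 then 0 else if b = 0 then \<infinity> else ereal (a * ln (a / b)))"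

definition kl :: "real \<Rightarrow> real \<Rightarrow> ereal" where
  "kl q p = kl_term q p + kl_term (1 - q) (1 - p)"

definition gaussian_vec :: "real \<Rightarrow> (real ^ 'n) measure" where
  "gaussian_vec v = density lborel (\<lambda>x. ennreal (\<Prod>i\<in>UNIV. normal_density 0 (sqrt v) (x $ i)))"

end

theory Submission
  imports Defs "HOL-Computational_Algebra.Formal_Power_Series"
begin

text \<open>
  Let \<open>Z\<close> be \<open>exp (n \<cdot> kl (R\<^sub>S \<parallel> R))\<close>, evaluated at the perturbed weights, times the likelihood
  ratio \<open>exp (-(\<parallel>\<phi> - \<phi>\<^sup>0 + \<epsilon>\<parallel>\<^sup>2 - \<parallel>\<epsilon>\<parallel>\<^sup>2) / (2\<sigma>\<^sup>2))\<close> of the prior \<open>N(\<phi>\<^sup>0, \<sigma>\<^sup>2 I)\<close> against the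
  posterior \<open>N(\<phi>, \<sigma>\<^sup>2 I)\<close> (and likewise for \<open>\<theta>\<close>). Translating the Gaussian noise turns the
  expectation over \<open>\<epsilon>\<close> into one over the prior, which does not depend on the sample; so by
  Fubini the expectation of \<open>Z\<close> is an average over fixed weights of
  \<open>E\<^sub>S exp (n \<cdot> kl (R\<^sub>S \<parallel> R))\<close>, which Maurer's inequality bounds by \<open>2 \<surd>n\<close>. Markov's
  inequality gives \<open>Z < 2 \<surd>n / \<delta>\<close> with probability at least \<open>1 - \<delta>\<close>, and taking logarithms
  yields the bound.

  Maurer's inequality: a convex function of a sum of independent \<open>[0,1]\<close>-valued variables
  has the largest mean when the variables are Bernoulli, which reduces it to
  \<open>\<Sum>\<^sub>k (n choose k) (k/n)\<^sup>k (1 - k/n)\<^sup>n\<^sup>-\<^sup>k \<le> 2 \<surd>n\<close>. Each term is compared with the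
  Krichevsky-Trofimov probability of \<open>k\<close> ones among \<open>n\<close> bits, and these probabilities sum to 1.
\<close>

section \<open>The Krichevsky-Trofimov bound\<close>

lemma ln_add_one_ge_pade:
  fixes x :: real
  assumes "0 \<le> x"
  shows "2 * x / (2 + x) \<le> ln (1 + x)"
proof -
  define g where "g = (\<lambda>x::real. ln (1 + x) - 2 * x / (2 + x))"
  have g': "(g has_real_derivative (1 / (1 + y) - 4 / (2 + y)^2)) (at y)" if "y \<ge> 0" for y
    unfolding g_def using that
    by (auto intro!: derivative_eq_intros simp: field_simps power2_eq_square)
  have "g 0 \<le> g x"
  proof (rule DERIV_nonneg_imp_nondecreasing[of 0 x g])
    fix y assume y: "0 \<le> y" "y \<le> x"
    have "1 / (1 + y) - 4 / (2 + y)^2 = y^2 / ((1 + y) * (2 + y)^2)"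
    proof -
      have "1 + y > 0" "2 + y > 0" using y by auto
      then show ?thesis by (simp add: divide_simps power2_eq_square) algebra
    qed
    also have "\<dots> \<ge> 0" using y by simp
    finally show "\<exists>y'. (g has_real_derivative y') (at y) \<and> 0 \<le> y'" using g'[of y] y by blast
  qed (use assms in auto)
  then show ?thesis by (simp add: g_def)
qed

lemma ln_add_one_le_pade:
  fixes x :: real
  assumes "0 \<le> x"
  shows "ln (1 + x) \<le> x * (6 + x) / (6 + 4 * x)"
proof -
  define g where "g = (\<lambda>x::real. x * (6 + x) / (6 + 4 * x) - ln (1 + x))"
  have g': "(g has_real_derivative ((36 + 12*y + 4*y^2) / (6 + 4*y)^2 - 1 / (1 + y))) (at y)"
    if "y \<ge> 0" for y
    unfolding g_def using that
    by (auto intro!: derivative_eq_intros simp: field_simps power2_eq_square)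
  have "g 0 \<le> g x"
  proof (rule DERIV_nonneg_imp_nondecreasing[of 0 x g])
    fix y assume y: "0 \<le> y" "y \<le> x"
    have "(36 + 12*y + 4*y^2) / (6 + 4*y)^2 - 1 / (1 + y) = 4 * y^3 / ((6 + 4*y)^2 * (1 + y))"
    proof -
      have "1 + y > 0" "6 + 4 * y > 0" using y by auto
      then show ?thesis by (simp add: divide_simps power2_eq_square power3_eq_cube) algebra
    qed
    also have "\<dots> \<ge> 0" using y by simp
    finally show "\<exists>y'. (g has_real_derivative y') (at y) \<and> 0 \<le> y'" using g'[of y] y by blast
  qed (use assms in auto)
  then show ?thesis by (simp add: g_def)
qed

lemma ln_add_inverse_le:
  fixes y :: real
  assumes "0 < y"
  shows "ln (1 + 1 / y) \<le> (6 * y + 1) / (y * (6 * y + 4))"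
proof -
  have "ln (1 + 1 / y) \<le> (1 / y) * (6 + 1 / y) / (6 + 4 * (1 / y))"
    using assms by (intro ln_add_one_le_pade) auto
  also have "\<dots> = (6 * y + 1) / (y * (6 * y + 4))"
  proof -
    have "6 + 4 * (1 / y) = (6 * y + 4) / y" "6 + 1 / y = (6 * y + 1) / y"
      using assms by (simp_all add: field_simps)
    then show ?thesis using assms by simp
  qed
  finally show ?thesis .
qed

lemma ln_succ_diff_ge:
  fixes m :: real
  assumes "0 < m"
  shows "1 \<le> (m + 1/2) * (ln (m + 1) - ln m)"
proof -
  have "1 + 1 / m = (m + 1) / m"
    using assms by (simp add: field_simps)
  then have "ln (m + 1) - ln m = ln (1 + 1 / m)"
    using assms by (simp add: ln_div)
  also have "\<dots> \<ge> 2 * (1 / m) / (2 + 1 / m)"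
    using assms by (intro ln_add_one_ge_pade) auto
  finally have "(m + 1/2) * (2 * (1 / m) / (2 + 1 / m)) \<le> (m + 1/2) * (ln (m + 1) - ln m)"
    using assms by (intro mult_left_mono) auto
  moreover have "(m + 1/2) * (2 * (1 / m) / (2 + 1 / m)) = 1"
    using assms by (simp add: field_simps)
  ultimately show ?thesis by linarith
qed

lemma xlnx_succ_diff_le:
  fixes a :: real
  assumes "0 \<le> a"
  shows "(a + 1) * ln (a + 1) - a * ln a - ln (a + 1/2) \<le> 1"
proof (cases "a = 0")
  case True
  then show ?thesis using ln_2_less_1 by (simp add: ln_div)
next
  case False
  then have a: "0 < a" using assms by simp
  have "(a + 1) * ln (a + 1) - a * ln a - ln (a + 1/2) = a * ln (1 + 1 / a) + ln (1 + 1 / (2 * a + 1))"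
  proof -
    have "1 + 1 / a = (a + 1) / a" "1 + 1 / (2 * a + 1) = (a + 1) / (a + 1/2)"
      using a by (simp_all add: field_simps)
    then have ln1: "ln (1 + 1 / a) = ln (a + 1) - ln a"
      and ln2: "ln (1 + 1 / (2 * a + 1)) = ln (a + 1) - ln (a + 1/2)"
      using a by (simp_all add: ln_div)
    show ?thesis unfolding ln1 ln2 by (simp add: algebra_simps)
  qed
  also have "\<dots> \<le> (6 * a + 1) / (6 * a + 4) + (12 * a + 7) / ((2 * a + 1) * (12 * a + 10))"
  proof (rule add_mono)
    have "a * ln (1 + 1 / a) \<le> a * ((6 * a + 1) / (a * (6 * a + 4)))"
      using a by (intro mult_left_mono ln_add_inverse_le) auto
    then show "a * ln (1 + 1 / a) \<le> (6 * a + 1) / (6 * a + 4)"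
      using a by simp
    show "ln (1 + 1 / (2 * a + 1)) \<le> (12 * a + 7) / ((2 * a + 1) * (12 * a + 10))"
      using ln_add_inverse_le[of "2 * a + 1"] a by (simp add: algebra_simps)
  qed
  also have "\<dots> = ((6 * a + 1) * ((2 * a + 1) * (12 * a + 10)) + (12 * a + 7) * (6 * a + 4))
      / ((6 * a + 4) * ((2 * a + 1) * (12 * a + 10)))"
    using a by (intro add_frac_eq) auto
  also have "\<dots> \<le> 1"
  proof -
    have "(6 * a + 1) * ((2 * a + 1) * (12 * a + 10)) + (12 * a + 7) * (6 * a + 4)
        \<le> (6 * a + 4) * ((2 * a + 1) * (12 * a + 10))"
      using a by (simp add: algebra_simps)
    moreover have "0 < (6 * a + 4) * ((2 * a + 1) * (12 * a + 10))"
      using a by (intro mult_pos_pos) auto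
    ultimately show ?thesis by simp
  qed
  finally show ?thesis .
qed

lemma kt_step_ineq:
  fixes a m :: nat
  assumes "m \<ge> 1"
  shows "real (a + 1) ^ (a + 1) * sqrt (real m) * real m ^ m
     \<le> (real a + 1/2) * real a ^ a * sqrt (real m + 1) * (real m + 1) ^ m"
proof -
  have m: "real m > 0" using assms by simp
  have ln_aa: "ln (real a ^ a) = real a * ln (real a)"
    by (cases "a = 0") (auto simp: ln_realpow)
  have "ln (real (a + 1) ^ (a + 1) * sqrt (real m) * real m ^ m)
        = real (a + 1) * ln (real (a + 1)) + ln (real m) / 2 + real m * ln (real m)"
    using m by (simp add: ln_mult ln_realpow ln_sqrt del: of_nat_Suc) (simp add: algebra_simps)
  also have "\<dots> \<le> ln (real a + 1/2) + real a * ln (real a) + ln (real m + 1) / 2 + real m * ln (real m + 1)"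
    using xlnx_succ_diff_le[of "real a"] ln_succ_diff_ge[OF m] by (simp add: algebra_simps)
  also have "\<dots> = ln ((real a + 1/2) * real a ^ a * sqrt (real m + 1) * (real m + 1) ^ m)"
  proof -
    have "real a ^ a > 0" by (cases "a = 0") auto
    then show ?thesis using m ln_aa by (simp add: ln_mult ln_realpow ln_sqrt add_pos_nonneg)
  qed
  finally show ?thesis
    using m by (subst (asm) ln_le_cancel_iff) (auto intro!: mult_pos_pos simp: add_pos_nonneg)
qed

text \<open>The Krichevsky-Trofimov probability of a fixed binary word with \<open>a\<close> ones and \<open>b\<close> zeros.\<close>

definition kt_weight :: "nat \<Rightarrow> nat \<Rightarrow> real" where
  "kt_weight a b = pochhammer (1/2) a * pochhammer (1/2) b / fact (a + b)"

lemma kt_weight_commute: "kt_weight a b = kt_weight b a"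
  by (simp add: kt_weight_def add.commute mult.commute)

lemma kt_weight_Suc_left: "kt_weight (Suc a) b = kt_weight a b * (real a + 1/2) / (real (a + b) + 1)"
  by (simp add: kt_weight_def pochhammer_Suc field_simps)

lemma kt_bound_Suc_left:
  assumes "a + b \<ge> 1"
    and "real a ^ a * real b ^ b \<le> 2 * sqrt (real (a + b)) * real (a + b) ^ (a + b) * kt_weight a b"
  shows "real (Suc a) ^ Suc a * real b ^ b
      \<le> 2 * sqrt (real (Suc a + b)) * real (Suc a + b) ^ (Suc a + b) * kt_weight (Suc a) b"
proof -
  define m where "m = a + b"
  define S where "S = sqrt (real m) * real m ^ m"
  define T where "T = sqrt (real m + 1) * (real m + 1) ^ m"
  have S: "S > 0" using assms(1) by (simp add: S_def m_def)
  have step: "real (a + 1) ^ (a + 1) * S \<le> (real a + 1/2) * real a ^ a * T"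
    using kt_step_ineq[of m a] assms(1) by (simp add: S_def T_def m_def mult_ac)
  have "(real (a + 1) ^ (a + 1) * real b ^ b) * S \<le> (real a + 1/2) * T * (real a ^ a * real b ^ b)"
    using mult_right_mono[OF step, of "real b ^ b"] by (simp add: mult_ac)
  also have "\<dots> \<le> (real a + 1/2) * T * (2 * S * kt_weight a b)"
    using assms(2) by (intro mult_left_mono) (auto simp: S_def T_def m_def mult_ac)
  also have "\<dots> = (2 * (real a + 1/2) * T * kt_weight a b) * S"
    by (simp add: mult_ac)
  finally have "real (a + 1) ^ (a + 1) * real b ^ b \<le> 2 * (real a + 1/2) * T * kt_weight a b"
    using S by (rule mult_right_le_imp_le)
  also have "\<dots> = 2 * sqrt (real (Suc a + b)) * real (Suc a + b) ^ (Suc a + b) * kt_weight (Suc a) b"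
    by (simp add: kt_weight_Suc_left T_def m_def field_simps)
  finally show ?thesis by simp
qed

lemma kt_bound:
  "a + b \<ge> 1 \<Longrightarrow>
    real a ^ a * real b ^ b \<le> 2 * sqrt (real (a + b)) * real (a + b) ^ (a + b) * kt_weight a b"
proof (induction "a + b" arbitrary: a b rule: nat_induct_at_least)
  case base
  then consider "a = 1" "b = 0" | "a = 0" "b = 1" by linarith
  then show ?case by cases (auto simp: kt_weight_def)
next
  case (Suc m)
  consider a' where "a = Suc a'" | b' where "a = 0" "b = Suc b'"
    using Suc.hyps(3) by (cases a; cases b) auto
  then show ?case
  proof cases
    case (1 a')
    then have "m = a' + b" using Suc.hyps(3) by simp
    then show ?thesis using 1 Suc.hyps(1) Suc.hyps(2)[of a' b] kt_bound_Suc_left[of a' b] by simp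
  next
    case (2 b')
    then have "m = b' + a" using Suc.hyps(3) by simp
    then have "real b ^ b * real a ^ a \<le> 2 * sqrt (real (b + a)) * real (b + a) ^ (b + a) * kt_weight b a"
      using 2 Suc.hyps(1) Suc.hyps(2)[of b' a] kt_bound_Suc_left[of b' a] by simp
    then show ?thesis by (simp add: kt_weight_commute add.commute mult.commute)
  qed
qed

text \<open>Since \<open>(1/2)\<^sub>k / k! = (-1)\<^sup>k (-1/2 gchoose k)\<close>, this is Vandermonde's identity for
  \<open>-1/2 + -1/2 = -1\<close>.\<close>

lemma sum_binomial_kt_weight: "(\<Sum>k\<le>n. real (n choose k) * kt_weight k (n - k)) = 1"
proof -
  have gchoose_half: "((-1/2::real) gchoose k) = (-1) ^ k * pochhammer (1/2) k / fact k" for k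
    by (simp add: gbinomial_pochhammer)
  have summand: "real (n choose k) * kt_weight k (n - k)
      = (-1) ^ n * (((-1/2::real) gchoose k) * ((-1/2) gchoose (n - k)))" if "k \<le> n" for k
  proof -
    have sign: "(-1::real) ^ n * ((-1) ^ k * (-1) ^ (n - k)) = 1"
      using that by (simp flip: power_add)
    have "real (n choose k) * kt_weight k (n - k)
        = pochhammer (1/2) k * pochhammer (1/2) (n - k) / (fact k * fact (n - k))"
      using that by (simp add: binomial_fact kt_weight_def)
    also have "\<dots> = ((-1::real) ^ n * ((-1) ^ k * (-1) ^ (n - k)))
        * (pochhammer (1/2) k * pochhammer (1/2) (n - k) / (fact k * fact (n - k)))"
      by (simp add: sign)
    also have "\<dots> = (-1) ^ n * (((-1/2::real) gchoose k) * ((-1/2) gchoose (n - k)))"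
      unfolding gchoose_half by (simp add: mult_ac)
    finally show ?thesis .
  qed
  have "(\<Sum>k\<le>n. real (n choose k) * kt_weight k (n - k))
      = (-1) ^ n * (\<Sum>k=0..n. ((-1/2::real) gchoose k) * ((-1/2) gchoose (n - k)))"
    by (simp add: summand sum_distrib_left atLeast0AtMost)
  also have "\<dots> = (-1) ^ n * ((-1::real) gchoose n)"
    using gbinomial_Vandermonde[of "-1/2::real" "-1/2" n] by simp
  also have "\<dots> = 1"
    by (simp add: gbinomial_pochhammer pochhammer_fact[symmetric] flip: power_add)
  finally show ?thesis .
qed

lemma binomial_max_likelihood_sum_le:
  assumes "n \<ge> 1"
  shows "(\<Sum>k\<le>n. real (n choose k) * (real k / real n) ^ k * ((real n - real k) / real n) ^ (n - k))
    \<le> 2 * sqrt (real n)"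
proof -
  have "(\<Sum>k\<le>n. real (n choose k) * (real k / real n) ^ k * ((real n - real k) / real n) ^ (n - k))
      \<le> (\<Sum>k\<le>n. real (n choose k) * (2 * sqrt (real n) * kt_weight k (n - k)))"
  proof (intro sum_mono)
    fix k assume k: "k \<in> {..n}"
    have "(real k / real n) ^ k * ((real n - real k) / real n) ^ (n - k)
        = real k ^ k * real (n - k) ^ (n - k) / real n ^ n"
      using k by (simp add: power_divide of_nat_diff power_add[symmetric])
    also have "\<dots> \<le> 2 * sqrt (real n) * real n ^ n * kt_weight k (n - k) / real n ^ n"
      using kt_bound[of k "n - k"] assms k by (intro divide_right_mono) auto
    also have "\<dots> = 2 * sqrt (real n) * kt_weight k (n - k)"
      using assms by simp
    finally show "real (n choose k) * (real k / real n) ^ k * ((real n - real k) / real n) ^ (n - k)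
        \<le> real (n choose k) * (2 * sqrt (real n) * kt_weight k (n - k))"
      by (simp add: mult.assoc mult_left_mono)
  qed
  also have "\<dots> = 2 * sqrt (real n)"
    by (simp add: sum_distrib_left[symmetric] mult_ac sum_binomial_kt_weight
        flip: sum_distrib_left)
  finally show ?thesis .
qed


section \<open>Convex functions of sums of \<open>[0,1]\<close>-valued variables\<close>

definition binomial_expectation :: "nat \<Rightarrow> real \<Rightarrow> (real \<Rightarrow> real) \<Rightarrow> real" where
  "binomial_expectation m p h = (\<Sum>k\<le>m. real (m choose k) * p ^ k * (1 - p) ^ (m - k) * h (real k))"

lemma binomial_expectation_Suc:
  "binomial_expectation (Suc m) p h = binomial_expectation m p (\<lambda>s. (1 - p) * h s + p * h (s + 1))"
proof -
  define A where "A = (\<lambda>k. real (m choose k) * p ^ k * (1 - p) ^ (Suc m - k) * h (real k))"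
  define B where "B = (\<lambda>k. real (m choose k) * p ^ Suc k * (1 - p) ^ (m - k) * h (real k + 1))"
  have "binomial_expectation (Suc m) p h
      = (1 - p) ^ Suc m * h 0 + (\<Sum>k\<le>m. real (Suc m choose Suc k) * p ^ Suc k * (1 - p) ^ (m - k) * h (real (Suc k)))"
    unfolding binomial_expectation_def by (subst sum.atMost_Suc_shift) simp
  also have "\<dots> = (1 - p) ^ Suc m * h 0 + (\<Sum>k\<le>m. A (Suc k)) + (\<Sum>k\<le>m. B k)"
    by (simp add: A_def B_def sum.distrib[symmetric] algebra_simps)
  also have "(1 - p) ^ Suc m * h 0 + (\<Sum>k\<le>m. A (Suc k)) = (\<Sum>k\<le>Suc m. A k)"
    by (simp only: sum.atMost_Suc_shift) (simp add: A_def)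
  also have "(\<Sum>k\<le>Suc m. A k) = (\<Sum>k\<le>m. A k)"
    by (simp add: A_def)
  also have "(\<Sum>k\<le>m. A k) + (\<Sum>k\<le>m. B k) = binomial_expectation m p (\<lambda>s. (1 - p) * h s + p * h (s + 1))"
    unfolding binomial_expectation_def sum.distrib[symmetric]
  proof (intro sum.cong refl)
    fix k assume "k \<in> {..m}"
    then have "Suc m - k = Suc (m - k)" by auto
    then show "A k + B k = real (m choose k) * p ^ k * (1 - p) ^ (m - k) * ((1 - p) * h (real k) + p * h (real k + 1))"
      by (simp add: A_def B_def algebra_simps)
  qed
  finally show ?thesis .
qed

lemma convex_on_translate:
  fixes h :: "'a::real_vector \<Rightarrow> real"
  assumes "convex_on T h" "convex S" "\<And>s. s \<in> S \<Longrightarrow> s + c \<in> T"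
  shows "convex_on S (\<lambda>s. h (s + c))"
proof (rule convex_onI)
  fix t :: real and x y assume t: "0 < t" "t < 1" and xy: "x \<in> S" "y \<in> S"
  have "h ((1 - t) *\<^sub>R (x + c) + t *\<^sub>R (y + c)) \<le> (1 - t) * h (x + c) + t * h (y + c)"
    using assms t xy by (intro convex_onD) auto
  moreover have "(1 - t) *\<^sub>R (x + c) + t *\<^sub>R (y + c) = (1 - t) *\<^sub>R x + t *\<^sub>R y + c"
    by (simp add: algebra_simps)
  ultimately show "h ((1 - t) *\<^sub>R x + t *\<^sub>R y + c) \<le> (1 - t) * h (x + c) + t * h (y + c)"
    by simp
qed (rule assms)

lemma integral_unit_interval:
  fixes f :: "'a \<Rightarrow> real"
  assumes "prob_space D" "f \<in> borel_measurable D" "\<And>x. x \<in> space D \<Longrightarrow> 0 \<le> f x \<and> f x \<le> 1"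
  shows "0 \<le> (\<integral>x. f x \<partial>D) \<and> (\<integral>x. f x \<partial>D) \<le> 1"
proof -
  interpret D: prob_space D by fact
  have "integrable D f"
    using assms by (intro D.integrable_const_bound[where B=1]) auto
  then show ?thesis
    using assms by (auto intro!: D.integral_ge_const D.integral_le_const)
qed

lemma sum_PiM_unit_interval:
  assumes "S \<in> space (PiM I (\<lambda>_. D))" "\<And>x. x \<in> space D \<Longrightarrow> 0 \<le> f x \<and> f x \<le> 1"
  shows "(\<Sum>j\<in>I. f (S j)) \<in> {0..real (card I)}"
proof -
  have "S j \<in> space D" if "j \<in> I" for j
    using assms(1) that by (auto simp: space_PiM)
  then show ?thesis
    using assms(2) by (auto intro!: sum_nonneg sum_bounded_above[where K=1, simplified])
qed

text \<open>The chord bound \<open>h (s + t) \<le> (1 - t) h s + t h (s + 1)\<close>, averaged over \<open>t = f x\<close>.\<close>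

lemma nn_integral_convex_le_chord:
  fixes f :: "'a \<Rightarrow> real" and h :: "real \<Rightarrow> real"
  assumes D: "prob_space D" and f: "f \<in> borel_measurable D"
    and f01: "\<And>x. x \<in> space D \<Longrightarrow> 0 \<le> f x \<and> f x \<le> 1"
    and h: "convex_on {s..s + 1} h" "0 \<le> h s" "0 \<le> h (s + 1)"
  shows "(\<integral>\<^sup>+ x. ennreal (h (f x + s)) \<partial>D)
    \<le> ennreal ((1 - (\<integral>x. f x \<partial>D)) * h s + (\<integral>x. f x \<partial>D) * h (s + 1))"
proof -
  interpret D: prob_space D by (rule D)
  have int_f: "integrable D f"
    using f f01 by (intro D.integrable_const_bound[where B=1]) auto
  have "(\<integral>\<^sup>+ x. ennreal (h (f x + s)) \<partial>D) \<le> (\<integral>\<^sup>+ x. ennreal (h s + f x * (h (s + 1) - h s)) \<partial>D)"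
  proof (intro nn_integral_mono ennreal_leI)
    fix x assume "x \<in> space D"
    then have "h ((1 - f x) *\<^sub>R s + f x *\<^sub>R (s + 1)) \<le> (1 - f x) * h s + f x * h (s + 1)"
      using f01 by (intro convex_onD[OF h(1)]) auto
    then show "h (f x + s) \<le> h s + f x * (h (s + 1) - h s)"
      by (simp add: algebra_simps)
  qed
  also have "\<dots> = ennreal (\<integral>x. h s + f x * (h (s + 1) - h s) \<partial>D)"
  proof (rule nn_integral_eq_integral)
    show "integrable D (\<lambda>x. h s + f x * (h (s + 1) - h s))"
      using int_f by auto
    have "0 \<le> (1 - f x) * h s + f x * h (s + 1)" if "x \<in> space D" for x
      using f01[OF that] h by (intro add_nonneg_nonneg mult_nonneg_nonneg) auto
    then show "AE x in D. 0 \<le> h s + f x * (h (s + 1) - h s)"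
      by (intro AE_I2) (simp add: algebra_simps)
  qed
  also have "(\<integral>x. h s + f x * (h (s + 1) - h s) \<partial>D)
      = (1 - (\<integral>x. f x \<partial>D)) * h s + (\<integral>x. f x \<partial>D) * h (s + 1)"
    using int_f by (simp add: D.prob_space algebra_simps)
  finally show ?thesis .
qed

lemma nn_integral_convex_sum_le_binomial:
  fixes f :: "'a \<Rightarrow> real" and h :: "real \<Rightarrow> real"
  assumes D: "prob_space D" and f: "f \<in> borel_measurable D"
    and f01: "\<And>x. x \<in> space D \<Longrightarrow> 0 \<le> f x \<and> f x \<le> 1"
    and "finite I" and "h \<in> borel_measurable borel" and "convex_on {0..real (card I)} h"
    and "\<And>s. s \<in> {0..real (card I)} \<Longrightarrow> 0 \<le> h s"
  shows "(\<integral>\<^sup>+ S. ennreal (h (\<Sum>i\<in>I. f (S i))) \<partial>PiM I (\<lambda>_. D))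
    \<le> ennreal (binomial_expectation (card I) (\<integral>x. f x \<partial>D) h)"
  using assms(4-)
proof (induction I arbitrary: h rule: finite_induct)
  case empty
  interpret prob_space "PiM {} (\<lambda>_. D)" by (intro prob_space_PiM D)
  show ?case by (simp add: emeasure_space_1 binomial_expectation_def)
next
  case (insert i I h)
  interpret product_sigma_finite "\<lambda>_. D"
    using D by (simp add: product_sigma_finite_def prob_space_imp_sigma_finite)
  define p where "p = (\<integral>x. f x \<partial>D)"
  define h' where "h' = (\<lambda>s. (1 - p) * h s + p * h (s + 1))"
  have card: "card (insert i I) = Suc (card I)" using insert by simp
  have p: "0 \<le> p" "p \<le> 1" using integral_unit_interval[OF D f f01] by (auto simp: p_def)
  have [measurable]: "h \<in> borel_measurable borel" "f \<in> borel_measurable D" by (fact insert.prems(1), fact f)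
  have h_convex: "convex_on {0..real (card I) + 1} h" and h_nonneg: "\<And>s. s \<in> {0..real (card I) + 1} \<Longrightarrow> 0 \<le> h s"
    using insert.prems(2,3) by (simp_all add: card add.commute)
  have sum_upd: "(\<Sum>j\<in>insert i I. f ((S(i := x)) j)) = f x + (\<Sum>j\<in>I. f (S j))" for S x
    using insert(1,2) by (simp add: sum.insert) (intro sum.cong, auto)
  have "(\<integral>\<^sup>+ S. ennreal (h (\<Sum>j\<in>insert i I. f (S j))) \<partial>PiM (insert i I) (\<lambda>_. D))
      = (\<integral>\<^sup>+ S. \<integral>\<^sup>+ x. ennreal (h (\<Sum>j\<in>insert i I. f ((S(i := x)) j))) \<partial>D \<partial>PiM I (\<lambda>_. D))"
    by (rule product_nn_integral_insert[OF insert(1,2)]) measurable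
  also have "\<dots> = (\<integral>\<^sup>+ S. \<integral>\<^sup>+ x. ennreal (h (f x + (\<Sum>j\<in>I. f (S j)))) \<partial>D \<partial>PiM I (\<lambda>_. D))"
    by (simp only: sum_upd)
  also have "\<dots> \<le> (\<integral>\<^sup>+ S. ennreal (h' (\<Sum>j\<in>I. f (S j))) \<partial>PiM I (\<lambda>_. D))"
  proof (rule nn_integral_mono)
    fix S assume "S \<in> space (PiM I (\<lambda>_. D))"
    then have s: "(\<Sum>j\<in>I. f (S j)) \<in> {0..real (card I)}"
      using f01 by (rule sum_PiM_unit_interval)
    then show "(\<integral>\<^sup>+ x. ennreal (h (f x + (\<Sum>j\<in>I. f (S j)))) \<partial>D) \<le> ennreal (h' (\<Sum>j\<in>I. f (S j)))"
      unfolding h'_def p_def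
      by (intro nn_integral_convex_le_chord[OF D f f01] convex_on_subset[OF h_convex] h_nonneg) auto
  qed
  also have "\<dots> \<le> ennreal (binomial_expectation (card I) p h')"
    unfolding p_def
  proof (rule insert.IH)
    show "h' \<in> borel_measurable borel" unfolding h'_def by measurable
    have "convex_on {0..real (card I)} (\<lambda>s. h (s + 1))"
      by (rule convex_on_translate[OF h_convex]) auto
    then show "convex_on {0..real (card I)} h'"
      unfolding h'_def using p
      by (intro convex_on_add convex_on_cmul convex_on_subset[OF h_convex]) auto
    show "0 \<le> h' s" if "s \<in> {0..real (card I)}" for s
      unfolding h'_def using p that h_nonneg[of s] h_nonneg[of "s + 1"]
      by (intro add_nonneg_nonneg mult_nonneg_nonneg) auto
  qed
  also have "\<dots> = ennreal (binomial_expectation (card (insert i I)) p h)"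
    by (simp add: card binomial_expectation_Suc h'_def)
  finally show ?case by (simp add: p_def)
qed

section \<open>Maurer's inequality\<close>

lemma convex_on_xlnx: "convex_on {0..} (\<lambda>x::real. x * ln x)"
proof -
  have convex_pos: "convex_on {0<..} (\<lambda>x::real. x * ln x)"
  proof (rule convex_on_realI[where f'="\<lambda>x. ln x + 1"])
    fix x :: real assume "x \<in> {0<..}"
    then show "((\<lambda>x. x * ln x) has_real_derivative ln x + 1) (at x)"
      by (auto intro!: derivative_eq_intros)
  qed auto
  show ?thesis
  proof (rule convex_on_linorderI)
    fix t x y :: real assume t: "0 < t" "t < 1" and x: "x \<in> {0..}" and xy: "x < y"
    show "((1 - t) *\<^sub>R x + t *\<^sub>R y) * ln ((1 - t) *\<^sub>R x + t *\<^sub>R y) \<le> (1 - t) * (x * ln x) + t * (y * ln y)"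
    proof (cases "x = 0")
      case True
      with xy have y: "y > 0" by simp
      have "(t * y) * ln (t * y) = t * y * ln t + t * y * ln y"
        using t y by (simp add: ln_mult algebra_simps)
      moreover have "t * y * ln t \<le> 0"
        using t y by (intro mult_nonneg_nonpos) auto
      ultimately show ?thesis using True by simp
    next
      case False
      then show ?thesis using convex_onD[OF convex_pos, of t x y] t x xy by simp
    qed
  qed simp
qed

definition kl_real :: "real \<Rightarrow> real \<Rightarrow> real" where
  "kl_real q p = q * ln (q / p) + (1 - q) * ln ((1 - q) / (1 - p))"

lemma kl_eq_kl_real: "0 < p \<Longrightarrow> p < 1 \<Longrightarrow> kl q p = ereal (kl_real q p)"
  by (simp add: kl_def kl_term_def kl_real_def)

lemma kl_self: "kl p p = 0"
  by (simp add: kl_def kl_term_def zero_ereal_def)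

lemma kl_neq_minf: "kl q p \<noteq> - \<infinity>"
  by (simp add: kl_def kl_term_def)

lemma measurable_kl[measurable (raw)]:
  assumes [measurable]: "f \<in> borel_measurable M" "g \<in> borel_measurable M"
  shows "(\<lambda>x. kl (f x) (g x)) \<in> borel_measurable M"
  unfolding kl_def kl_term_def by measurable

lemma kl_real_expand:
  assumes "0 < p" "p < 1" "0 \<le> q" "q \<le> 1"
  shows "kl_real q p = q * ln q + (1 - q) * ln (1 - q) - q * ln p - (1 - q) * ln (1 - p)"
proof -
  have "q * ln (q / p) = q * ln q - q * ln p"
    using assms by (cases "q = 0") (auto simp: ln_div algebra_simps)
  moreover have "(1 - q) * ln ((1 - q) / (1 - p)) = (1 - q) * ln (1 - q) - (1 - q) * ln (1 - p)"
    using assms by (cases "q = 1") (auto simp: ln_div algebra_simps)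
  ultimately show ?thesis by (simp add: kl_real_def)
qed

lemma convex_on_kl_real:
  assumes "0 < p" "p < 1"
  shows "convex_on {0..1} (\<lambda>q. kl_real q p)"
proof (rule convex_onI)
  fix t x y :: real assume t: "0 < t" "t < 1" and x: "x \<in> {0..1}" and y: "y \<in> {0..1}"
  define z where "z = (1 - t) * x + t * y"
  have z: "0 \<le> z" "z \<le> 1" using t x y unfolding z_def
    by (auto intro!: add_nonneg_nonneg mult_nonneg_nonneg convex_bound_le)
  have "z * ln z \<le> (1 - t) * (x * ln x) + t * (y * ln y)"
    using convex_onD[OF convex_on_xlnx, of t x y] t x y by (simp add: z_def)
  moreover have "(1 - z) * ln (1 - z) \<le> (1 - t) * ((1 - x) * ln (1 - x)) + t * ((1 - y) * ln (1 - y))"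
  proof -
    have "1 - z = (1 - t) * (1 - x) + t * (1 - y)" by (simp add: z_def algebra_simps)
    then show ?thesis using convex_onD[OF convex_on_xlnx, of t "1 - x" "1 - y"] t x y by simp
  qed
  ultimately have "kl_real z p \<le> (1 - t) * (x * ln x + (1 - x) * ln (1 - x) - x * ln p - (1 - x) * ln (1 - p))
      + t * (y * ln y + (1 - y) * ln (1 - y) - y * ln p - (1 - y) * ln (1 - p))"
    using kl_real_expand[OF assms z] by (simp add: z_def algebra_simps)
  also have "\<dots> = (1 - t) * kl_real x p + t * kl_real y p"
    using kl_real_expand[OF assms] x y by simp
  finally show "kl_real ((1 - t) *\<^sub>R x + t *\<^sub>R y) p \<le> (1 - t) * kl_real x p + t * kl_real y p"
    by (simp add: z_def)
qed simp

lemma convex_on_exp_comp: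
  assumes "convex_on S g"
  shows "convex_on S (\<lambda>x. exp (g x))"
proof (rule convex_onI)
  fix t :: real and x y assume t: "0 < t" "t < 1" and xy: "x \<in> S" "y \<in> S"
  have "exp (g ((1 - t) *\<^sub>R x + t *\<^sub>R y)) \<le> exp ((1 - t) * g x + t * g y)"
    using convex_onD[OF assms] t xy by simp
  also have "\<dots> \<le> (1 - t) * exp (g x) + t * exp (g y)"
    using convex_onD[OF exp_convex, of t "g x" "g y"] t by simp
  finally show "exp (g ((1 - t) *\<^sub>R x + t *\<^sub>R y)) \<le> (1 - t) * exp (g x) + t * exp (g y)" .
qed (rule convex_on_imp_convex[OF assms])

lemma convex_on_exp_kl_real:
  assumes "0 < p" "p < 1" "n > 0"
  shows "convex_on {0..real n} (\<lambda>s. exp (real n * kl_real (s / real n) p))"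
proof (intro convex_on_exp_comp convex_on_cmul)
  show "convex_on {0..real n} (\<lambda>s. kl_real (s / real n) p)"
  proof (rule convex_onI)
    fix t x y :: real assume t: "0 < t" "t < 1" and x: "x \<in> {0..real n}" and y: "y \<in> {0..real n}"
    have "x / real n \<in> {0..1}" "y / real n \<in> {0..1}" using x y assms(3) by auto
    moreover have "((1 - t) *\<^sub>R x + t *\<^sub>R y) / real n = (1 - t) *\<^sub>R (x / real n) + t *\<^sub>R (y / real n)"
      by (simp add: add_divide_distrib)
    ultimately show "kl_real (((1 - t) *\<^sub>R x + t *\<^sub>R y) / real n) p
        \<le> (1 - t) * kl_real (x / real n) p + t * kl_real (y / real n) p"
      using convex_onD[OF convex_on_kl_real[OF assms(1,2)], of t "x / real n" "y / real n"] t by simp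
  qed simp
qed simp

definition exp_kl :: "nat \<Rightarrow> real \<Rightarrow> real \<Rightarrow> ennreal" where
  "exp_kl n q p = (if kl q p = \<infinity> then \<infinity> else ennreal (exp (real n * real_of_ereal (kl q p))))"

lemma measurable_exp_kl[measurable (raw)]:
  assumes [measurable]: "f \<in> borel_measurable M" "g \<in> borel_measurable M"
  shows "(\<lambda>x. exp_kl n (f x) (g x)) \<in> borel_measurable M"
  unfolding exp_kl_def by measurable

lemma exp_kl_ge_of_kl_gt:
  assumes "ereal ((g + ln C) / real n) < kl q p" "n > 0" "C > 0"
  shows "ennreal C \<le> exp_kl n q p * ennreal (exp (- g))"
proof (cases "kl q p = \<infinity>")
  case True
  then show ?thesis by (simp add: exp_kl_def ennreal_top_mult)
next
  case False
  then obtain r where r: "kl q p = ereal r" using kl_neq_minf[of q p] by (cases "kl q p") auto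
  then have "(g + ln C) / real n < r" using assms(1) by simp
  then have "ln C < real n * r - g" using assms(2) by (simp add: field_simps)
  then have "C < exp (real n * r) * exp (- g)"
    using assms(3) by (metis exp_diff exp_less_cancel_iff exp_ln diff_conv_add_uminus exp_add)
  then show ?thesis
    using r by (simp add: exp_kl_def ennreal_mult'[symmetric] ennreal_leI)
qed

lemma exp_mult_ln_eq_power:
  fixes z :: real
  assumes "0 \<le> z" "z = 0 \<Longrightarrow> k = 0"
  shows "exp (real k * ln z) = z ^ k"
  using assms by (cases "z = 0") (simp_all add: exp_of_nat_mult)

lemma binomial_weight_exp_kl_real:
  assumes p: "0 < p" "p < 1" and "k \<le> n" "n > 0"
  shows "p ^ k * (1 - p) ^ (n - k) * exp (real n * kl_real (real k / real n) p)
       = (real k / real n) ^ k * ((real n - real k) / real n) ^ (n - k)"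
proof -
  define a where "a = real k / real n / p"
  define b where "b = real (n - k) / real n / (1 - p)"
  have "1 - real k / real n = real (n - k) / real n"
    using assms(3,4) by (simp add: field_simps of_nat_diff)
  moreover have "real n * (real k / real n) = real k" "real n * (real (n - k) / real n) = real (n - k)"
    using assms(4) by auto
  ultimately have "real n * kl_real (real k / real n) p = real k * ln a + real (n - k) * ln b"
    unfolding kl_real_def a_def b_def by (simp only: distrib_left mult.assoc[symmetric])
  moreover have "exp (real k * ln a) = a ^ k"
    using assms by (intro exp_mult_ln_eq_power) (auto simp: a_def)
  moreover have "exp (real (n - k) * ln b) = b ^ (n - k)"
    using assms by (intro exp_mult_ln_eq_power) (auto simp: b_def)
  ultimately have "exp (real n * kl_real (real k / real n) p) = a ^ k * b ^ (n - k)"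
    by (simp add: exp_add)
  moreover have "p ^ k * a ^ k = (real k / real n) ^ k"
    using p by (simp add: a_def power_mult_distrib[symmetric])
  moreover have "(1 - p) ^ (n - k) * b ^ (n - k) = ((real n - real k) / real n) ^ (n - k)"
    using p assms(3) by (simp add: b_def power_mult_distrib[symmetric] of_nat_diff)
  ultimately show ?thesis by (simp add: mult_ac)
qed

lemma AE_eq_integral_if_integral_0_or_1:
  fixes f :: "'a \<Rightarrow> real"
  assumes D: "prob_space D" and f: "f \<in> borel_measurable D"
    and f01: "\<And>x. x \<in> space D \<Longrightarrow> 0 \<le> f x \<and> f x \<le> 1"
    and "(\<integral>x. f x \<partial>D) = 0 \<or> (\<integral>x. f x \<partial>D) = 1"
  shows "AE x in D. f x = (\<integral>x. f x \<partial>D)"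
proof -
  interpret D: prob_space D by (rule D)
  have int_f: "integrable D f"
    using f f01 by (intro D.integrable_const_bound[where B=1]) auto
  show ?thesis
  proof (rule disjE[OF assms(4)])
    assume "(\<integral>x. f x \<partial>D) = 0"
    moreover have "AE x in D. f x = 0"
      using integral_nonneg_eq_0_iff_AE[OF int_f] f01 calculation by auto
    ultimately show ?thesis by simp
  next
    assume int1: "(\<integral>x. f x \<partial>D) = 1"
    then have "(\<integral>x. 1 - f x \<partial>D) = 0" using int_f by (simp add: D.prob_space)
    then have "AE x in D. 1 - f x = 0"
      using integral_nonneg_eq_0_iff_AE[of D "\<lambda>x. 1 - f x"] int_f f01 by auto
    then show ?thesis using int1 by auto
  qed
qed

theorem maurer_inequality:
  fixes f :: "'a \<Rightarrow> real"
  assumes D: "prob_space D" and f[measurable]: "f \<in> borel_measurable D"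
    and f01: "\<And>x. x \<in> space D \<Longrightarrow> 0 \<le> f x \<and> f x \<le> 1" and n: "n > 0"
  shows "(\<integral>\<^sup>+ S. exp_kl n ((1 / real n) * (\<Sum>i<n. f (S i))) (\<integral>x. f x \<partial>D) \<partial>PiM {..<n} (\<lambda>_. D))
    \<le> ennreal (2 * sqrt (real n))"
proof -
  interpret P: prob_space "PiM {..<n} (\<lambda>_. D)" by (intro prob_space_PiM D)
  define p where "p = (\<integral>x. f x \<partial>D)"
  have "0 \<le> p" "p \<le> 1" using integral_unit_interval[OF D f f01] by (auto simp: p_def)
  then consider "p = 0 \<or> p = 1" | "0 < p" "p < 1" by fastforce
  then have "(\<integral>\<^sup>+ S. exp_kl n ((1 / real n) * (\<Sum>i<n. f (S i))) p \<partial>PiM {..<n} (\<lambda>_. D))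
    \<le> ennreal (2 * sqrt (real n))"
  proof cases
    case 1
    then have "AE x in D. f x = p"
      using AE_eq_integral_if_integral_0_or_1[OF D f f01] by (simp add: p_def)
    then have "AE S in PiM {..<n} (\<lambda>_. D). \<forall>i\<in>{..<n}. f (S i) = p"
      by (intro eventually_ball_finite ballI AE_PiM_component[where P="\<lambda>x. f x = p", OF D]) auto
    then have "AE S in PiM {..<n} (\<lambda>_. D). exp_kl n ((1 / real n) * (\<Sum>i<n. f (S i))) p = 1"
      by eventually_elim (use n in \<open>simp add: exp_kl_def kl_self\<close>)
    then have "(\<integral>\<^sup>+ S. exp_kl n ((1 / real n) * (\<Sum>i<n. f (S i))) p \<partial>PiM {..<n} (\<lambda>_. D)) = 1"
      by (simp add: nn_integral_cong_AE P.emeasure_space_1)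
    moreover have "1 \<le> sqrt (real n)"
      using n by simp
    then have "1 \<le> 2 * sqrt (real n)" by linarith
    ultimately show ?thesis by simp
  next
    case 2
    define h where "h = (\<lambda>s. exp (real n * kl_real (s / real n) p))"
    have h_meas: "h \<in> borel_measurable borel"
      unfolding h_def kl_real_def by measurable
    have "(\<integral>\<^sup>+ S. exp_kl n ((1 / real n) * (\<Sum>i<n. f (S i))) p \<partial>PiM {..<n} (\<lambda>_. D))
        = (\<integral>\<^sup>+ S. ennreal (h (\<Sum>i\<in>{..<n}. f (S i))) \<partial>PiM {..<n} (\<lambda>_. D))"
      using 2 by (intro nn_integral_cong) (simp add: exp_kl_def kl_eq_kl_real h_def)
    also have "\<dots> \<le> ennreal (binomial_expectation n p h)"
      using nn_integral_convex_sum_le_binomial[OF D f f01 finite_lessThan h_meas] convex_on_exp_kl_real[OF 2 n]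
      by (simp add: h_def p_def)
    also have "binomial_expectation n p h
        = (\<Sum>k\<le>n. real (n choose k) * (real k / real n) ^ k * ((real n - real k) / real n) ^ (n - k))"
      unfolding binomial_expectation_def h_def
      using binomial_weight_exp_kl_real[OF 2 _ n] by (intro sum.cong) (auto simp: mult_ac)
    also have "\<dots> \<le> 2 * sqrt (real n)"
      using binomial_max_likelihood_sum_le[of n] n by simp
    finally show ?thesis by (simp add: ennreal_leI)
  qed
  then show ?thesis by (simp add: p_def)
qed

section \<open>Translating an isotropic Gaussian\<close>

lemma sets_gaussian_vec [measurable_cong, simp]: "sets (gaussian_vec v) = sets borel"
  by (simp add: gaussian_vec_def)

lemma space_gaussian_vec [simp]: "space (gaussian_vec v) = UNIV"
  by (simp add: gaussian_vec_def)

lemma prod_Basis_vec: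
  fixes F :: "real \<Rightarrow> 'a::comm_monoid_mult" and x :: "real ^ 'n"
  shows "(\<Prod>b\<in>Basis. F (x \<bullet> b)) = (\<Prod>i\<in>UNIV. F (x $ i))"
proof -
  have Basis: "(Basis :: (real ^ 'n) set) = range (\<lambda>i. axis i 1)"
    by (auto simp: Basis_vec_def)
  have inj: "inj (\<lambda>i::'n. axis i (1::real))"
    by (auto simp: inj_on_def axis_eq_axis)
  show ?thesis
    unfolding Basis by (subst prod.reindex[OF inj]) (simp add: inner_axis)
qed

lemma prob_space_gaussian_vec:
  assumes "v > 0"
  shows "prob_space (gaussian_vec v :: (real ^ 'n) measure)"
proof
  have "emeasure (gaussian_vec v :: (real ^ 'n) measure) (space (gaussian_vec v))
      = (\<integral>\<^sup>+ x. (\<Prod>b\<in>Basis. ennreal (normal_density 0 (sqrt v) ((x :: real ^ 'n) \<bullet> b))) \<partial>lborel)"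
    by (simp add: gaussian_vec_def emeasure_density prod_Basis_vec prod_ennreal)
  also have "\<dots> = (\<Prod>b\<in>(Basis :: (real ^ 'n) set). \<integral>\<^sup>+ y. ennreal (normal_density 0 (sqrt v) y) \<partial>lborel)"
    by (rule nn_integral_lborel_prod) auto
  also have "\<dots> = 1"
    using assms integrable_normal_density[of "sqrt v" 0] integral_normal_density[of "sqrt v" 0]
    by (subst nn_integral_eq_integral) auto
  finally show "emeasure (gaussian_vec v :: (real ^ 'n) measure) (space (gaussian_vec v)) = 1" .
qed

definition gaussian_vec_pdf :: "real \<Rightarrow> real ^ 'n \<Rightarrow> real" where
  "gaussian_vec_pdf v x = (\<Prod>i\<in>UNIV. normal_density 0 (sqrt v) (x $ i))"

lemma gaussian_vec_eq_density: "gaussian_vec v = density lborel (\<lambda>x. ennreal (gaussian_vec_pdf v x))"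
  by (simp add: gaussian_vec_def gaussian_vec_pdf_def)

lemma measurable_gaussian_vec_pdf[measurable]: "gaussian_vec_pdf v \<in> borel_measurable borel"
  unfolding gaussian_vec_pdf_def by measurable

lemma gaussian_vec_pdf_nonneg: "0 \<le> gaussian_vec_pdf v x"
  by (simp add: gaussian_vec_pdf_def prod_nonneg)

lemma gaussian_vec_pdf_eq:
  fixes x :: "real ^ 'n"
  assumes "v > 0"
  shows "gaussian_vec_pdf v x = (1 / sqrt (2 * pi * v)) ^ CARD('n) * exp (- (norm x)\<^sup>2 / (2 * v))"
proof -
  have "gaussian_vec_pdf v x = (\<Prod>i\<in>UNIV. 1 / sqrt (2 * pi * v) * exp (- (x $ i)\<^sup>2 / (2 * v)))"
    unfolding gaussian_vec_pdf_def normal_density_def using assms by simp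
  also have "\<dots> = (1 / sqrt (2 * pi * v)) ^ CARD('n) * exp (\<Sum>i\<in>UNIV. - (x $ i)\<^sup>2 / (2 * v))"
    by (simp only: prod.distrib prod_constant) (simp add: exp_sum)
  also have "(\<Sum>i\<in>UNIV. - (x $ i)\<^sup>2 / (2 * v)) = - (norm x)\<^sup>2 / (2 * v)"
    by (simp add: norm_vec_def L2_set_def sum_nonneg sum_divide_distrib[symmetric] sum_negf)
  finally show ?thesis .
qed

lemma gaussian_vec_pdf_translate:
  fixes e w :: "real ^ 'n"
  assumes "v > 0"
  shows "gaussian_vec_pdf v e * exp (- (((norm (w + e))\<^sup>2 - (norm e)\<^sup>2) / (2 * v))) = gaussian_vec_pdf v (w + e)"
proof -
  have "- (norm e)\<^sup>2 / (2 * v) + - (((norm (w + e))\<^sup>2 - (norm e)\<^sup>2) / (2 * v)) = - (norm (w + e))\<^sup>2 / (2 * v)"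
    using assms by (simp add: field_simps)
  then show ?thesis
    using assms by (simp add: gaussian_vec_pdf_eq mult.assoc flip: exp_add)
qed

text \<open>The factor \<open>exp (-(\<parallel>\<phi> - \<phi>\<^sub>0 + e\<parallel>\<^sup>2 - \<parallel>e\<parallel>\<^sup>2) / (2v))\<close> is the density of
  \<open>N(\<phi>\<^sub>0, v I)\<close> with respect to \<open>N(\<phi>, v I)\<close> at \<open>\<phi> + e\<close>.\<close>

lemma nn_integral_gaussian_vec_translate:
  fixes F :: "real ^ 'n \<Rightarrow> ennreal" and \<phi> \<phi>0 :: "real ^ 'n"
  assumes [measurable]: "F \<in> borel_measurable borel" and v: "v > 0"
  shows "(\<integral>\<^sup>+ e. F (\<phi> + e) * ennreal (exp (- (((norm (\<phi> - \<phi>0 + e))\<^sup>2 - (norm e)\<^sup>2) / (2 * v)))) \<partial>gaussian_vec v)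
       = (\<integral>\<^sup>+ u. F (\<phi>0 + u) \<partial>gaussian_vec v)"
proof -
  define H where "H = (\<lambda>e. ennreal (gaussian_vec_pdf v (\<phi> - \<phi>0 + e)) * F (\<phi> + e))"
  have [measurable]: "H \<in> borel_measurable borel" unfolding H_def by measurable
  have "(\<integral>\<^sup>+ e. F (\<phi> + e) * ennreal (exp (- (((norm (\<phi> - \<phi>0 + e))\<^sup>2 - (norm e)\<^sup>2) / (2 * v)))) \<partial>gaussian_vec v)
      = (\<integral>\<^sup>+ e. H e \<partial>lborel)"
    unfolding gaussian_vec_eq_density H_def
    by (subst nn_integral_density)
       (auto intro!: nn_integral_cong simp: gaussian_vec_pdf_translate[OF v, symmetric]
         gaussian_vec_pdf_nonneg ennreal_mult' mult_ac)
  also have "\<dots> = (\<integral>\<^sup>+ u. H (\<phi>0 - \<phi> + u) \<partial>lborel)"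
    by (subst lborel_distr_plus[symmetric, of "\<phi>0 - \<phi>"], subst nn_integral_distr) auto
  also have "\<dots> = (\<integral>\<^sup>+ u. F (\<phi>0 + u) \<partial>gaussian_vec v)"
    unfolding gaussian_vec_eq_density H_def
    by (subst nn_integral_density) (auto simp: algebra_simps)
  finally show ?thesis .
qed

lemma nn_integral_gaussian_pair_translate:
  fixes V :: "real ^ 'p \<Rightarrow> real ^ 'q \<Rightarrow> ennreal" and \<phi> \<phi>0 :: "real ^ 'p" and \<theta> \<theta>0 :: "real ^ 'q"
  assumes V: "(\<lambda>(a, b). V a b) \<in> borel_measurable (borel \<Otimes>\<^sub>M borel)"
    and v1: "v1 > 0" and v2: "v2 > 0"
  shows "(\<integral>\<^sup>+ (e1, e2). V (\<phi> + e1) (\<theta> + e2)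
             * ennreal (exp (- (((norm (\<phi> - \<phi>0 + e1))\<^sup>2 - (norm e1)\<^sup>2) / (2 * v1)
                             + ((norm (\<theta> - \<theta>0 + e2))\<^sup>2 - (norm e2)\<^sup>2) / (2 * v2))))
           \<partial>(gaussian_vec v1 \<Otimes>\<^sub>M gaussian_vec v2))
       = (\<integral>\<^sup>+ u. V (\<phi>0 + fst u) (\<theta>0 + snd u) \<partial>(gaussian_vec v1 \<Otimes>\<^sub>M gaussian_vec v2))"
proof -
  interpret G2: prob_space "gaussian_vec v2 :: (real ^ 'q) measure"
    by (rule prob_space_gaussian_vec[OF v2])
  define K1 where "K1 e1 = ennreal (exp (- (((norm (\<phi> - \<phi>0 + e1))\<^sup>2 - (norm e1)\<^sup>2) / (2 * v1))))" for e1
  define K2 where "K2 e2 = ennreal (exp (- (((norm (\<theta> - \<theta>0 + e2))\<^sup>2 - (norm e2)\<^sup>2) / (2 * v2))))" for e2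
  have exp_split: "ennreal (exp (- (a + b))) = ennreal (exp (- a)) * ennreal (exp (- b))" for a b :: real
    by (simp only: minus_add_distrib exp_add ennreal_mult'[OF exp_ge_zero])
  have [measurable]: "K1 \<in> borel_measurable borel" "K2 \<in> borel_measurable borel"
    unfolding K1_def K2_def by measurable
  have [measurable]: "(\<lambda>x. V (f x) (g x)) \<in> borel_measurable M"
    if [measurable]: "f \<in> borel_measurable M" "g \<in> borel_measurable M" for f g M
    using measurable_compose[OF measurable_Pair[OF that] V] by simp
  have "(\<integral>\<^sup>+ (e1, e2). V (\<phi> + e1) (\<theta> + e2)
             * ennreal (exp (- (((norm (\<phi> - \<phi>0 + e1))\<^sup>2 - (norm e1)\<^sup>2) / (2 * v1)
                             + ((norm (\<theta> - \<theta>0 + e2))\<^sup>2 - (norm e2)\<^sup>2) / (2 * v2))))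
           \<partial>(gaussian_vec v1 \<Otimes>\<^sub>M gaussian_vec v2))
      = (\<integral>\<^sup>+ e. V (\<phi> + fst e) (\<theta> + snd e) * K1 (fst e) * K2 (snd e) \<partial>(gaussian_vec v1 \<Otimes>\<^sub>M gaussian_vec v2))"
    by (intro nn_integral_cong) (simp only: split_beta' exp_split K1_def K2_def mult.assoc)
  also have "\<dots> = (\<integral>\<^sup>+ e1. \<integral>\<^sup>+ e2. V (\<phi> + e1) (\<theta> + e2) * K1 e1 * K2 e2 \<partial>gaussian_vec v2 \<partial>gaussian_vec v1)"
    by (subst G2.nn_integral_fst[symmetric]) (auto simp: split_beta')
  also have "\<dots> = (\<integral>\<^sup>+ e1. (\<integral>\<^sup>+ e2. V (\<phi> + e1) (\<theta> + e2) * K2 e2 \<partial>gaussian_vec v2) * K1 e1 \<partial>gaussian_vec v1)"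
    by (intro nn_integral_cong, subst nn_integral_multc[symmetric]) (auto simp: ac_simps)
  also have "\<dots> = (\<integral>\<^sup>+ e1. (\<integral>\<^sup>+ u2. V (\<phi> + e1) (\<theta>0 + u2) \<partial>gaussian_vec v2) * K1 e1 \<partial>gaussian_vec v1)"
    unfolding K2_def
    by (intro nn_integral_cong arg_cong2[where f="(*)"] nn_integral_gaussian_vec_translate v2 refl)
      measurable
  also have "\<dots> = (\<integral>\<^sup>+ u1. \<integral>\<^sup>+ u2. V (\<phi>0 + u1) (\<theta>0 + u2) \<partial>gaussian_vec v2 \<partial>gaussian_vec v1)"
    unfolding K1_def
    by (rule nn_integral_gaussian_vec_translate[OF _ v1, where F="\<lambda>a. \<integral>\<^sup>+ u2. V a (\<theta>0 + u2) \<partial>gaussian_vec v2"])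
      measurable
  also have "\<dots> = (\<integral>\<^sup>+ u. V (\<phi>0 + fst u) (\<theta>0 + snd u) \<partial>(gaussian_vec v1 \<Otimes>\<^sub>M gaussian_vec v2))"
    by (subst G2.nn_integral_fst[symmetric]) (auto simp: split_beta')
  finally show ?thesis .
qed

section \<open>The PAC-Bayes bound\<close>

lemma nn_integral_gaussian_posterior_le:
  fixes W :: "'s \<Rightarrow> real ^ 'p \<Rightarrow> real ^ 'q \<Rightarrow> ennreal" and A :: "'s \<Rightarrow> (real ^ 'p) \<times> (real ^ 'q)"
    and \<phi>0 :: "real ^ 'p" and \<theta>0 :: "real ^ 'q"
  assumes P: "prob_space P"
    and W: "(\<lambda>(S, a, b). W S a b) \<in> borel_measurable (P \<Otimes>\<^sub>M (borel \<Otimes>\<^sub>M borel))"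
    and A[measurable]: "A \<in> P \<rightarrow>\<^sub>M borel \<Otimes>\<^sub>M borel"
    and v1: "v1 > 0" and v2: "v2 > 0"
    and bound: "\<And>a b. (\<integral>\<^sup>+ S. W S a b \<partial>P) \<le> c"
  shows "(\<integral>\<^sup>+ (S, e1, e2). W S (fst (A S) + e1) (snd (A S) + e2)
             * ennreal (exp (- (((norm (fst (A S) - \<phi>0 + e1))\<^sup>2 - (norm e1)\<^sup>2) / (2 * v1)
                             + ((norm (snd (A S) - \<theta>0 + e2))\<^sup>2 - (norm e2)\<^sup>2) / (2 * v2))))
           \<partial>(P \<Otimes>\<^sub>M (gaussian_vec v1 \<Otimes>\<^sub>M gaussian_vec v2))) \<le> c"
    (is "integral\<^sup>N _ ?Z \<le> c")
proof -
  let ?G = "gaussian_vec v1 \<Otimes>\<^sub>M gaussian_vec v2 :: ((real ^ 'p) \<times> (real ^ 'q)) measure"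
  interpret P: prob_space P by (rule P)
  interpret G: prob_space ?G
    by (intro prob_space_pair prob_space_gaussian_vec v1 v2)
  interpret PG: pair_sigma_finite P ?G ..
  have [measurable]: "(\<lambda>x. W (s x) (f x) (g x)) \<in> borel_measurable M"
    if [measurable]: "s \<in> M \<rightarrow>\<^sub>M P" "f \<in> borel_measurable M" "g \<in> borel_measurable M" for s f g M
    using measurable_compose[OF measurable_Pair[OF that(1) measurable_Pair[OF that(2,3)]] W] by simp
  have "integral\<^sup>N (P \<Otimes>\<^sub>M ?G) ?Z = (\<integral>\<^sup>+ S. \<integral>\<^sup>+ e. ?Z (S, e) \<partial>?G \<partial>P)"
    by (rule G.nn_integral_fst[symmetric]) measurable
  also have "\<dots> = (\<integral>\<^sup>+ S. \<integral>\<^sup>+ u. W S (\<phi>0 + fst u) (\<theta>0 + snd u) \<partial>?G \<partial>P)"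
  proof (rule nn_integral_cong)
    fix S assume "S \<in> space P"
    then have "(\<lambda>(a, b). W S a b) \<in> borel_measurable (borel \<Otimes>\<^sub>M borel)"
      using measurable_Pair2[OF W] by (simp add: split_beta')
    then show "(\<integral>\<^sup>+ e. ?Z (S, e) \<partial>?G) = (\<integral>\<^sup>+ u. W S (\<phi>0 + fst u) (\<theta>0 + snd u) \<partial>?G)"
      unfolding prod.case by (rule nn_integral_gaussian_pair_translate[OF _ v1 v2])
  qed
  also have "\<dots> = (\<integral>\<^sup>+ u. \<integral>\<^sup>+ S. W S (\<phi>0 + fst u) (\<theta>0 + snd u) \<partial>P \<partial>?G)"
    by (rule PG.Fubini'[symmetric]) measurable
  also have "\<dots> \<le> (\<integral>\<^sup>+ u. c \<partial>?G)"
    by (intro nn_integral_mono bound)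
  also have "\<dots> = c"
    by (simp add: G.emeasure_space_1)
  finally show ?thesis .
qed

lemma prob_kl_le_of_nn_integral_exp_kl_le:
  fixes q p g :: "'a \<Rightarrow> real"
  assumes M: "prob_space M"
    and [measurable]: "q \<in> borel_measurable M" "p \<in> borel_measurable M" "g \<in> borel_measurable M"
    and n: "n > 0" and C: "C > 0" and c: "0 \<le> c"
    and bound: "(\<integral>\<^sup>+ \<omega>. exp_kl n (q \<omega>) (p \<omega>) * ennreal (exp (- g \<omega>)) \<partial>M) \<le> ennreal c"
  shows "1 - c / C \<le> measure M {\<omega> \<in> space M. kl (q \<omega>) (p \<omega>) \<le> ereal ((g \<omega> + ln C) / real n)}"
    (is "_ \<le> measure M ?good")
proof -
  interpret prob_space M by (rule M)
  define B where "B = {\<omega> \<in> space M. ennreal C \<le> exp_kl n (q \<omega>) (p \<omega>) * ennreal (exp (- g \<omega>))}"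
  have [measurable]: "B \<in> sets M" "?good \<in> sets M"
    unfolding B_def by measurable
  have "ennreal (C * measure M B) = (\<integral>\<^sup>+ \<omega>. ennreal C * indicator B \<omega> \<partial>M)"
    using C by (simp add: emeasure_eq_measure ennreal_mult nn_integral_cmult_indicator)
  also have "\<dots> \<le> (\<integral>\<^sup>+ \<omega>. exp_kl n (q \<omega>) (p \<omega>) * ennreal (exp (- g \<omega>)) \<partial>M)"
    by (intro nn_integral_mono) (auto simp: B_def indicator_def)
  finally have "ennreal (C * measure M B) \<le> ennreal c"
    using bound by (rule order.trans)
  then have "measure M B \<le> c / C"
    using C c by (simp add: ennreal_le_iff field_simps)
  moreover have "space M - ?good \<subseteq> B"
    using exp_kl_ge_of_kl_gt[OF _ n C] by (auto simp: B_def not_le)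
  then have "measure M (space M - ?good) \<le> measure M B"
    by (intro finite_measure_mono) auto
  ultimately show ?thesis
    by (simp add: prob_compl)
qed

lemma measurable_case_prod3:
  assumes "(\<lambda>(a, b, c). g a b c) \<in> M1 \<Otimes>\<^sub>M M2 \<Otimes>\<^sub>M M3 \<rightarrow>\<^sub>M N"
    and "fa \<in> M \<rightarrow>\<^sub>M M1" "fb \<in> M \<rightarrow>\<^sub>M M2" "fc \<in> M \<rightarrow>\<^sub>M M3"
  shows "(\<lambda>x. g (fa x) (fb x) (fc x)) \<in> M \<rightarrow>\<^sub>M N"
  using measurable_compose[OF measurable_Pair[OF assms(2) measurable_Pair[OF assms(3,4)]] assms(1)]
  by simp
theorem theorem4:
  fixes X :: "(real ^ 'd) set"
    and D :: "(real ^ 'd) measure"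
    and n :: nat
    and loss :: "real ^ 'p \<Rightarrow> real ^ 'q \<Rightarrow> real ^ 'd \<Rightarrow> real"
    and \<delta> v_phi v_theta :: real
    and \<phi>0 :: "real ^ 'p" and \<theta>0 :: "real ^ 'q"
    and A :: "(nat \<Rightarrow> real ^ 'd) \<Rightarrow> (real ^ 'p) \<times> (real ^ 'q)"
  assumes D_prob: "prob_space D"
    and D_sets: "sets D = sets (restrict_space borel X)"
    and n_pos: "n > 0"
    and loss_meas: "(\<lambda>(\<phi>, \<theta>, x). loss \<phi> \<theta> x) \<in> borel_measurable (borel \<Otimes>\<^sub>M borel \<Otimes>\<^sub>M D)"
    and loss_bounded: "\<And>\<phi> \<theta> x. x \<in> X \<Longrightarrow> 0 \<le> loss \<phi> \<theta> x \<and> loss \<phi> \<theta> x \<le> 1"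
    and delta: "0 < \<delta>" "\<delta> < 1"
    and var_pos: "v_phi > 0" "v_theta > 0"
    and A_meas: "A \<in> PiM {..<n} (\<lambda>_. D) \<rightarrow>\<^sub>M borel"
  shows "measure (PiM {..<n} (\<lambda>_. D) \<Otimes>\<^sub>M (gaussian_vec v_phi \<Otimes>\<^sub>M gaussian_vec v_theta))
           {\<omega> \<in> space (PiM {..<n} (\<lambda>_. D) \<Otimes>\<^sub>M (gaussian_vec v_phi \<Otimes>\<^sub>M gaussian_vec v_theta)).
              (case \<omega> of (S, e_phi, e_theta) \<Rightarrow>
                 (let \<phi> = fst (A S); \<theta> = snd (A S);
                      R = (\<lambda>a b. \<integral>x. loss a b x \<partial>D);
                      Remp = (\<lambda>a b. (1 / real n) * (\<Sum>i<n. loss a b (S i)))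
                  in kl (Remp (\<phi> + e_phi) (\<theta> + e_theta)) (R (\<phi> + e_phi) (\<theta> + e_theta))
                     \<le> ereal ((norm (\<phi> - \<phi>0 + e_phi) ^ 2 - norm e_phi ^ 2) / (2 * v_phi * real n)
                             + (norm (\<theta> - \<theta>0 + e_theta) ^ 2 - norm e_theta ^ 2) / (2 * v_theta * real n)
                             + ln (2 * sqrt (real n) / \<delta>) / real n)))}
         \<ge> 1 - \<delta>"
proof -
  let ?P = "PiM {..<n} (\<lambda>_. D)"
  let ?M = "?P \<Otimes>\<^sub>M (gaussian_vec v_phi \<Otimes>\<^sub>M gaussian_vec v_theta)"
  interpret D: prob_space D by (rule D_prob)
  have loss01: "\<And>a b x. x \<in> space D \<Longrightarrow> 0 \<le> loss a b x \<and> loss a b x \<le> 1"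
    using loss_bounded sets_eq_imp_space_eq[OF D_sets] by (simp add: space_restrict_space)
  note [measurable (raw)] = measurable_case_prod3[OF loss_meas]
  have [measurable]: "A \<in> ?P \<rightarrow>\<^sub>M borel \<Otimes>\<^sub>M borel"
    using A_meas by (simp add: borel_prod)
  define W where "W S a b = exp_kl n ((1 / real n) * (\<Sum>i<n. loss a b (S i))) (\<integral>x. loss a b x \<partial>D)"
    for S a b
  define emp_risk where "emp_risk = (\<lambda>(S, e1, e2). (1 / real n) * (\<Sum>i<n. loss (fst (A S) + e1) (snd (A S) + e2) (S i)))"
  define risk where "risk = (\<lambda>(S, e1, e2). \<integral>x. loss (fst (A S) + e1) (snd (A S) + e2) x \<partial>D)"
  define log_ratio where "log_ratio = (\<lambda>(S, e1, e2). ((norm (fst (A S) - \<phi>0 + e1))\<^sup>2 - (norm e1)\<^sup>2) / (2 * v_phi)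
    + ((norm (snd (A S) - \<theta>0 + e2))\<^sup>2 - (norm e2)\<^sup>2) / (2 * v_theta))"
  have moment: "(\<integral>\<^sup>+ (S, e1, e2). W S (fst (A S) + e1) (snd (A S) + e2) * ennreal (exp (- log_ratio (S, e1, e2))) \<partial>?M)
      \<le> ennreal (2 * sqrt (real n))"
    unfolding log_ratio_def prod.case
  proof (rule nn_integral_gaussian_posterior_le[OF prob_space_PiM[OF D_prob] _ _ var_pos])
    show "(\<lambda>(S, a, b). W S a b) \<in> borel_measurable (?P \<Otimes>\<^sub>M (borel \<Otimes>\<^sub>M borel))"
      unfolding W_def by measurable
    show "(\<integral>\<^sup>+ S. W S a b \<partial>?P) \<le> ennreal (2 * sqrt (real n))" for a b
      unfolding W_def using loss01 by (intro maurer_inequality[OF D_prob _ _ n_pos]) auto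
  qed measurable
  have "1 - 2 * sqrt (real n) / (2 * sqrt (real n) / \<delta>)
      \<le> measure ?M {\<omega> \<in> space ?M. kl (emp_risk \<omega>) (risk \<omega>) \<le> ereal ((log_ratio \<omega> + ln (2 * sqrt (real n) / \<delta>)) / real n)}"
  proof (rule prob_kl_le_of_nn_integral_exp_kl_le)
    show "prob_space ?M"
      by (intro prob_space_pair prob_space_PiM D_prob prob_space_gaussian_vec var_pos)
    show "emp_risk \<in> borel_measurable ?M" "risk \<in> borel_measurable ?M" "log_ratio \<in> borel_measurable ?M"
      unfolding emp_risk_def risk_def log_ratio_def by measurable
    show "(\<integral>\<^sup>+ \<omega>. exp_kl n (emp_risk \<omega>) (risk \<omega>) * ennreal (exp (- log_ratio \<omega>)) \<partial>?M) \<le> ennreal (2 * sqrt (real n))"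
      using moment by (simp add: W_def emp_risk_def risk_def split_beta')
  qed (use n_pos delta in auto)
  then show ?thesis
    using n_pos delta
    by (simp add: emp_risk_def risk_def log_ratio_def Let_def split_beta' add_divide_distrib divide_divide_eq_left mult_ac)
qed

end
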